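(* Let $m>n>0$ be relatively prime integers and $(r,s)\in\mathbb{Z}^2$. Then $(r,s)=\beta(m,\,m-n)$ if and only if $(s,\,r-s)=\beta(2m-n,\,m)$.
   Context: For relatively prime integers $a>b>0$, $\beta(a,b)$ denotes the Bézout coefficients given by the Euclidean algorithm: with $a=q_1b+r_1$, $b=q_2r_1+r_2$, $\dots$, $r_{k-2}=q_kr_{k-1}+r_k$, $r_{k-1}=1$, $r_k=0$ ($r_{-1}=a$, $r_0=b$), write $\begin{pmatrix}a\\ b\end{pmatrix}=M\begin{pmatrix}1\\0\end{pmatrix}$ with $M=\prod_{i=1}^k\begin{pmatrix}q_i&1\\1&0\end{pmatrix}$; then $\beta(a,b)$ is the first row of $M^{-1}$, and $\beta(a,b)=(r,s)$ satisfies $ra+sb=1$. *)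

theory Defs
  imports "HOL-Analysis.Analysis"
begin

function euclid_quots :: "int \<Rightarrow> int \<Rightarrow> int list" where
  "euclid_quots a b = (if b \<le> 0 then [] else (a div b) # euclid_quots b (a mod b))"
  by auto
termination
  by (relation "Wellfounded.measure (\<lambda>(a, b). nat b)") auto

definition qmat :: "int \<Rightarrow> int^2^2" where
  "qmat q = (\<chi> i j. if i = 1 \<and> j = 1 then q else if i = 2 \<and> j = 2 then 0 else 1)"

definition euclid_M :: "int \<Rightarrow> int \<Rightarrow> int^2^2" where
  "euclid_M a b = foldr (\<lambda>q A. qmat q ** A) (euclid_quots a b) (mat 1)"

definition beta :: "int \<Rightarrow> int \<Rightarrow> int \<times> int" where
  "beta a b = (matrix_inv (euclid_M a b) $ 1 $ 1, matrix_inv (euclid_M a b) $ 1 $ 2)"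

end

theory Submission
  imports Defs
begin

text \<open>Prepending the quotient q to the Euclidean algorithm multiplies M on the left by
  [[q,1],[1,0]], so M^{-1} is multiplied on the right by [[0,1],[1,-q]], whose first row
  change is (r, s) \<mapsto> (s, r - q s). The step from (m, m - n) to (2m - n, m) is q = 1.\<close>

lemma matrix_inv_eqI:
  fixes A :: "'a::semiring_1^'n^'n" and B :: "'a^'n^'n"
  assumes "A ** B = mat 1" and "B ** A = mat 1"
  shows "matrix_inv A = B"
proof -
  have inv: "A ** matrix_inv A = mat 1 \<and> matrix_inv A ** A = mat 1"
    unfolding matrix_inv_def by (rule someI[of _ B]) (use assms in auto)
  have "matrix_inv A = (B ** A) ** matrix_inv A"
    using assms by (simp add: matrix_mul_lid)
  also have "\<dots> = B ** (A ** matrix_inv A)"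
    by (simp add: matrix_mul_assoc)
  also have "\<dots> = B"
    using inv by (simp add: matrix_mul_rid)
  finally show ?thesis .
qed

lemma matrix_inv_invertible:
  fixes A :: "'a::semiring_1^'n^'n"
  assumes "invertible A"
  shows "A ** matrix_inv A = mat 1" and "matrix_inv A ** A = mat 1"
  using someI_ex[OF assms[unfolded invertible_def]] unfolding matrix_inv_def by auto

lemma matrix_inv_mult:
  fixes A B :: "'a::semiring_1^'n^'n"
  assumes "invertible A" and "invertible B"
  shows "matrix_inv (A ** B) = matrix_inv B ** matrix_inv A"
proof (rule matrix_inv_eqI)
  note A = matrix_inv_invertible[OF assms(1)] and B = matrix_inv_invertible[OF assms(2)]
  show "A ** B ** (matrix_inv B ** matrix_inv A) = mat 1"
    by (metis A(1) B(1) matrix_mul_assoc matrix_mul_rid)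
  show "matrix_inv B ** matrix_inv A ** (A ** B) = mat 1"
    by (metis A(2) B(2) matrix_mul_assoc matrix_mul_rid)
qed

definition qmat_inv :: "int \<Rightarrow> int^2^2" where
  "qmat_inv q = (\<chi> i j. if i = 1 \<and> j = 1 then 0 else if i = 2 \<and> j = 2 then -q else 1)"

lemma qmat_mult_qmat_inv: "qmat q ** qmat_inv q = mat 1" "qmat_inv q ** qmat q = mat 1"
  by (simp_all add: qmat_def qmat_inv_def matrix_matrix_mult_def vec_eq_iff forall_2 sum_2 mat_def)

lemma invertible_qmat: "invertible (qmat q)"
  unfolding invertible_def using qmat_mult_qmat_inv by blast

lemma matrix_inv_qmat: "matrix_inv (qmat q) = qmat_inv q"
  by (rule matrix_inv_eqI) (fact qmat_mult_qmat_inv)+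

lemma invertible_euclid_M: "invertible (euclid_M a b)"
proof -
  have "invertible (foldr (\<lambda>q A. qmat q ** A) qs (mat 1 :: int^2^2))" for qs
  proof (induction qs)
    case Nil
    show ?case
      unfolding invertible_def by (auto intro!: exI[of _ "mat 1"] simp: matrix_mul_lid)
  next
    case (Cons q qs)
    then show ?case
      using invertible_qmat invertible_mult by auto
  qed
  then show ?thesis
    unfolding euclid_M_def .
qed

lemma euclid_quots_step:
  assumes "0 \<le> b" and "b < a"
  shows "euclid_quots (q * a + b) a = q # euclid_quots a b"
proof -
  have "(q * a + b) div a = q" and "(q * a + b) mod a = b"
    using assms by (simp_all add: div_pos_pos_trivial mod_pos_pos_trivial)
  then show ?thesis
    using assms by (subst euclid_quots.simps) simp
qed

lemma euclid_M_step:
  assumes "0 \<le> b" and "b < a"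
  shows "euclid_M (q * a + b) a = qmat q ** euclid_M a b"
  unfolding euclid_M_def euclid_quots_step[OF assms] by simp

lemma beta_step:
  assumes "0 \<le> b" and "b < a"
  shows "beta (q * a + b) a = (snd (beta a b), fst (beta a b) - q * snd (beta a b))"
proof -
  have "matrix_inv (euclid_M (q * a + b) a) = matrix_inv (euclid_M a b) ** qmat_inv q"
    unfolding euclid_M_step[OF assms]
    by (simp add: matrix_inv_mult invertible_qmat invertible_euclid_M matrix_inv_qmat)
  then show ?thesis
    unfolding beta_def by (simp add: qmat_inv_def matrix_matrix_mult_def sum_2)
qed

theorem lemma2p3:
  fixes m n r s :: int
  assumes "m > n" and "n > 0" and "coprime m n"
  shows "(r, s) = beta m (m - n) \<longleftrightarrow> (s, r - s) = beta (2 * m - n) m"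
proof -
  have "beta (2 * m - n) m = beta (1 * m + (m - n)) m"
    by simp
  also have "\<dots> = (snd (beta m (m - n)), fst (beta m (m - n)) - snd (beta m (m - n)))"
    using assms by (simp only: beta_step) simp
  finally show ?thesis
    by (cases "beta m (m - n)") auto
qed

end
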